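(* Let $(E_N)_{N\ge1}$ be events such that $\lim_{N\to\infty}N^{\eta'}\mathbb P(E_N)=0$ for some $\eta'>0$. Then for every $\eta>0$, $$\lim_{N\to\infty}\mathbb E\Big[\Big|\log\Big(\sum_{k=1}^N w_{I^N_k}\Big)\Big|^\eta;\,E_N\Big]=0.$$
   Context: Fix $\gamma>1$, $\beta\in(0,1)$. $\Xi$ is a Poisson point process on $(0,\infty)$ with intensity $x^{-2}dx$ and atoms $w_1>w_2>\cdots$. Conditionally on $\Xi$, $I^N=(I^N_1,\dots,I^N_N)$ are $N$ indices sampled without replacement from $\{1,\dots,\lceil N^\gamma\rceil\}$ with weights $w_i^\beta$ (each successive draw picks a not-yet-drawn index $i$ with probability proportional to $w_i^\beta$ among the not-yet-drawn ones). All random objects live on one probability space. *)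

theory Defs
  imports "HOL-Probability.Probability"
begin

definition ppp_intensity :: "real set \<Rightarrow> ennreal" where
  "ppp_intensity A = (\<integral>\<^sup>+ x\<in>A. ennreal (1 / x\<^sup>2) \<partial>lborel)"

definition ppp_count :: "(nat \<Rightarrow> 'a \<Rightarrow> real) \<Rightarrow> real set \<Rightarrow> 'a \<Rightarrow> nat" where
  "ppp_count w A x = card {i. w i x \<in> A}"

text \<open>The random sequence w (indexed from 0) lists, in strictly decreasing order, the atoms
  of a Poisson point process on (0,infinity) with intensity x^(-2) dx: counts in disjoint
  Borel sets of finite intensity are a.s. finite, independent, and Poisson distributed
  with mean the intensity of the set.\<close>
definition is_ppp_inv_sq :: "'a measure \<Rightarrow> (nat \<Rightarrow> 'a \<Rightarrow> real) \<Rightarrow> bool" where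
  "is_ppp_inv_sq M w \<longleftrightarrow>
     (\<forall>i. w i \<in> borel_measurable M) \<and>
     (AE x in M. \<forall>i. 0 < w i x \<and> w (Suc i) x < w i x) \<and>
     (\<forall>(n::nat) (A :: nat \<Rightarrow> real set).
        ((\<forall>j<n. A j \<in> sets borel \<and> A j \<subseteq> {0<..} \<and> ppp_intensity (A j) < \<infinity>)
         \<and> disjoint_family_on A {..<n}) \<longrightarrow>
        ((\<forall>j<n. AE x in M. finite {i. w i x \<in> A j}) \<and>
         (\<forall>j<n. \<forall>k::nat. measure M {x \<in> space M. ppp_count w (A j) x = k}
              = (let \<mu> = enn2real (ppp_intensity (A j)) in exp (- \<mu>) * \<mu> ^ k / fact k)) \<and>
         prob_space.indep_vars M (\<lambda>_. count_space UNIV) (\<lambda>j. ppp_count w (A j)) {..<n}))"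

text \<open>Probability of drawing the ordered injective sequence j 0, ..., j (N-1) from
  {0..<m} without replacement with weights (w i)^beta.\<close>
definition swor_prob :: "real \<Rightarrow> (nat \<Rightarrow> real) \<Rightarrow> nat \<Rightarrow> nat \<Rightarrow> (nat \<Rightarrow> nat) \<Rightarrow> real" where
  "swor_prob \<beta> ws m N j =
     (if inj_on j {..<N} \<and> j ` {..<N} \<subseteq> {..<m}
      then (\<Prod>k<N. ws (j k) powr \<beta> /
               ((\<Sum>i<m. ws i powr \<beta>) - (\<Sum>l<k. ws (j l) powr \<beta>)))
      else 0)"

text \<open>Conditionally on the sequence w, I N = (I N 0, ..., I N (N-1)) is a weighted sample
  without replacement of size N from {0..<m N}: for every event B in the sigma-algebra
  generated by w, P(I N = j and B) = E[swor_prob ... ; B].\<close>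
definition is_cond_swor ::
  "'a measure \<Rightarrow> real \<Rightarrow> (nat \<Rightarrow> nat) \<Rightarrow> (nat \<Rightarrow> 'a \<Rightarrow> real) \<Rightarrow> (nat \<Rightarrow> 'a \<Rightarrow> nat \<Rightarrow> nat) \<Rightarrow> bool" where
  "is_cond_swor M \<beta> m w I \<longleftrightarrow>
     (\<forall>N. \<forall>k<N. (\<lambda>x. I N x k) \<in> measurable M (count_space UNIV)) \<and>
     (\<forall>N (j :: nat \<Rightarrow> nat). \<forall>C \<in> sets (PiM UNIV (\<lambda>_::nat. (borel :: real measure))).
        measure M {x \<in> space M. (\<forall>k<N. I N x k = j k) \<and> (\<lambda>i. w i x) \<in> C}
        = (\<integral>x. indicator {x \<in> space M. (\<lambda>i. w i x) \<in> C} x * swor_prob \<beta> (\<lambda>i. w i x) (m N) N j \<partial>M))"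

end

theory Submission
  imports Defs "HOL-Real_Asymp.Real_Asymp"
begin

text \<open>
  On the event that all sampled indices lie below m = \<lceil>N^\<gamma>\<rceil>, the sum S of the sampled
  atoms satisfies w(m-1) \<le> S \<le> N w(0). Hence |ln S| > t forces either w(0) > e^t / N,
  which has probability at most N e^-t, or w(m-1) < e^-t, i.e. fewer than m atoms above e^-t,
  a Poisson lower tail of mean e^t that is at most e^-t once t \<ge> 3 ln (2m + 2).
  Writing |ln S|^\<eta> \<le> K + #{j. K + j < |ln S|^\<eta>} with K = \<lceil>N^\<eta>'\<rceil> and integrating over E(N)
  bounds the expectation by K P(E(N)) + (N + 1) \<Sum>j. exp (-(K + j)^(1/\<eta>)); the first term
  vanishes by hypothesis and the second decays faster than any power of N.
\<close>

lemma ppp_intensity_atLeast: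
  assumes "(c::real) > 0"
  shows "ppp_intensity {c..} = ennreal (1 / c)"
proof -
  have "ppp_intensity {c..} = (\<integral>\<^sup>+x. ennreal (1 / x\<^sup>2) * indicator {c..} x \<partial>lborel)"
    unfolding ppp_intensity_def by (simp add: mult.commute)
  also have "\<dots> = ennreal (0 - (- 1 / c))"
    by (rule nn_integral_FTC_atLeast[where F = "\<lambda>x. - 1 / x"])
      (use assms in \<open>auto intro!: derivative_eq_intros simp: power2_eq_square, real_asymp\<close>)
  finally show ?thesis by simp
qed

lemma is_ppp_inv_sq_atLeast:
  assumes "is_ppp_inv_sq M w" and "(c::real) > 0"
  shows "AE x in M. finite {i. w i x \<in> {c..}}"
    and "measure M {x \<in> space M. ppp_count w {c..} x = k} = exp (- (1 / c)) * (1 / c) ^ k / fact k"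
proof -
  have "{c..} \<subseteq> {0<..}" using assms(2) by auto
  then have "(AE x in M. finite {i. w i x \<in> {c..}}) \<and>
        (\<forall>k::nat. measure M {x \<in> space M. ppp_count w {c..} x = k}
           = (let \<mu> = 1 / c in exp (- \<mu>) * \<mu> ^ k / fact k))"
    using assms(1)[unfolded is_ppp_inv_sq_def, THEN conjunct2, THEN conjunct2,
        rule_format, of 1 "\<lambda>_. {c..}"] assms(2)
    by (simp add: ppp_intensity_atLeast disjoint_family_on_def)
  then show "AE x in M. finite {i. w i x \<in> {c..}}"
    and "measure M {x \<in> space M. ppp_count w {c..} x = k} = exp (- (1 / c)) * (1 / c) ^ k / fact k"
    by (simp_all add: Let_def)
qed

text \<open>Measurability is not part of the definition; it follows because the event has positive
  probability, whereas non-measurable sets are assigned measure 0.\<close>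
lemma ppp_count_atLeast_sets:
  assumes "is_ppp_inv_sq M w" and "(c::real) > 0"
  shows "{x \<in> space M. ppp_count w {c..} x = k} \<in> sets M"
proof (rule ccontr)
  assume "{x \<in> space M. ppp_count w {c..} x = k} \<notin> sets M"
  then have "measure M {x \<in> space M. ppp_count w {c..} x = k} = 0"
    by (rule measure_notin_sets)
  with is_ppp_inv_sq_atLeast(2)[OF assms, of k] assms(2) show False by simp
qed

lemma is_ppp_inv_sq_AE_pos_decseq:
  assumes "is_ppp_inv_sq M w"
  shows "AE x in M. (\<forall>i. 0 < w i x) \<and> decseq (\<lambda>i. w i x)"
proof -
  have "AE x in M. \<forall>i. 0 < w i x \<and> w (Suc i) x < w i x"
    using assms unfolding is_ppp_inv_sq_def by blast
  then show ?thesis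
    by (rule eventually_mono) (auto intro: decseq_SucI less_imp_le)
qed

lemma ppp_first_atom_tail:
  assumes "prob_space M" and "is_ppp_inv_sq M w" and "(c::real) > 0"
  shows "measure M {x \<in> space M. c < w 0 x} \<le> 1 / c"
proof -
  interpret prob_space M by fact
  let ?Z = "{x \<in> space M. ppp_count w {c..} x = 0}"
  have Z: "?Z \<in> sets M" using ppp_count_atLeast_sets[OF assms(2,3)] .
  have "measure M {x \<in> space M. c < w 0 x} \<le> measure M (space M - ?Z)"
  proof (rule finite_measure_mono_AE)
    show "AE x in M. x \<in> {x \<in> space M. c < w 0 x} \<longrightarrow> x \<in> space M - ?Z"
      using is_ppp_inv_sq_atLeast(1)[OF assms(2,3)]
    proof (rule eventually_mono, intro impI)
      fix x assume "finite {i. w i x \<in> {c..}}" and "x \<in> {x \<in> space M. c < w 0 x}"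
      then show "x \<in> space M - ?Z" by (auto simp: ppp_count_def) (meson less_imp_le)
    qed
  qed (use Z in auto)
  also have "\<dots> = 1 - exp (- (1 / c))"
    using prob_compl[OF Z] is_ppp_inv_sq_atLeast(2)[OF assms(2,3), of 0] by simp
  also have "\<dots> \<le> 1 / c" using exp_ge_add_one_self[of "- (1 / c)"] by simp
  finally show ?thesis .
qed

lemma ppp_atom_lower_tail:
  assumes "prob_space M" and "is_ppp_inv_sq M w" and "(s::real) > 0" and "m \<ge> 1"
  shows "measure M {x \<in> space M. w (m - 1) x < s}
           \<le> (\<Sum>k<m. exp (- (1 / s)) * (1 / s) ^ k / fact k)"
proof -
  interpret prob_space M by fact
  let ?Z = "\<lambda>k. {x \<in> space M. ppp_count w {s..} x = k}"
  have Z: "?Z k \<in> sets M" for k using ppp_count_atLeast_sets[OF assms(2,3)] .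
  have "measure M {x \<in> space M. w (m - 1) x < s} \<le> measure M (\<Union>k<m. ?Z k)"
  proof (rule finite_measure_mono_AE)
    show "AE x in M. x \<in> {x \<in> space M. w (m - 1) x < s} \<longrightarrow> x \<in> (\<Union>k<m. ?Z k)"
      using is_ppp_inv_sq_AE_pos_decseq[OF assms(2)]
    proof (rule eventually_mono, intro impI)
      fix x assume "(\<forall>i. 0 < w i x) \<and> decseq (\<lambda>i. w i x)"
        and x: "x \<in> {x \<in> space M. w (m - 1) x < s}"
      then have dec: "decseq (\<lambda>i. w i x)" by blast
      have "{i. w i x \<in> {s..}} \<subseteq> {..<m - 1}"
      proof
        fix i assume "i \<in> {i. w i x \<in> {s..}}"
        then show "i \<in> {..<m - 1}"
          using x decseqD[OF dec, of "m - 1" i] by (cases "i < m - 1") auto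
      qed
      then have "ppp_count w {s..} x \<le> m - 1"
        unfolding ppp_count_def by (metis card_lessThan card_mono finite_lessThan)
      then show "x \<in> (\<Union>k<m. ?Z k)" using x assms(4) by auto
    qed
  qed (use Z in auto)
  also have "\<dots> \<le> (\<Sum>k<m. measure M (?Z k))" by (rule measure_UNION_le) (use Z in auto)
  also have "\<dots> = (\<Sum>k<m. exp (- (1 / s)) * (1 / s) ^ k / fact k)"
    using is_ppp_inv_sq_atLeast(2)[OF assms(2,3)] by simp
  finally show ?thesis .
qed

lemma power_div_fact_le_exp:
  assumes "0 \<le> (x::real)"
  shows "x ^ n / fact n \<le> exp x"
proof -
  have "(\<Sum>i\<in>{n}. x ^ i /\<^sub>R fact i) \<le> (\<Sum>i. x ^ i /\<^sub>R fact i)"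
    by (rule sum_le_suminf) (use assms summable_exp_generic[of x] in auto)
  then show ?thesis by (simp add: exp_def divide_inverse mult.commute)
qed

text \<open>Compare with the single term l^n / n! of exp l for n = 2m + 2, using n! \<le> n^n.\<close>
lemma mult_power_Suc_le_exp:
  fixes l :: real
  assumes "(2 * real m + 2) ^ 3 \<le> l"
  shows "real m * l ^ (m + 1) \<le> exp l"
proof -
  define q where "q = 2 * real m + 2"
  define n where "n = 2 * m + 2"
  have q2: "q \<ge> 2" and qn: "q = real n" by (simp_all add: q_def n_def)
  have l1: "l \<ge> 1" using assms q2 unfolding q_def[symmetric] by (smt (verit) one_le_power)
  have "real m * fact n \<le> q * q ^ n"
    using fact_le_power[of n] q2 qn by (intro mult_mono) (auto simp: q_def)
  also have "\<dots> = q ^ (n + 1)" by simp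
  also have "\<dots> \<le> q ^ (3 * (m + 1))" using q2 by (intro power_increasing) (auto simp: n_def)
  also have "\<dots> = (q ^ 3) ^ (m + 1)" by (simp only: power_mult)
  also have "\<dots> \<le> l ^ (m + 1)" using assms q2 by (intro power_mono) (auto simp: q_def)
  finally have "real m * l ^ (m + 1) * fact n \<le> l ^ (m + 1) * l ^ (m + 1)"
    using l1 by (simp add: mult_left_mono mult.commute mult.left_commute)
  also have "\<dots> = l ^ n" by (simp add: n_def power_add[symmetric] mult_2)
  also have "\<dots> \<le> exp l * fact n"
    using power_div_fact_le_exp[of l n] l1 by (simp add: divide_le_eq)
  finally show ?thesis by simp
qed

lemma poisson_cdf_le_exp_neg:
  assumes "u \<ge> 3 * ln (2 * real m + 2)"
  shows "(\<Sum>k<m. exp (- exp u) * exp u ^ k / fact k) \<le> exp (- u)"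
proof -
  define l where "l = exp u"
  have "(0::real) < 2 * real m + 2" by simp
  then have "(2 * real m + 2) ^ 3 = exp (3 * ln (2 * real m + 2))"
    by (metis exp_ln ln_realpow of_nat_numeral zero_less_power)
  also have "\<dots> \<le> l" unfolding l_def using assms by simp
  finally have lq: "(2 * real m + 2) ^ 3 \<le> l" .
  then have l1: "l \<ge> 1" by (smt (verit) one_le_power of_nat_0_le_iff)
  have "(\<Sum>k<m. exp (- l) * l ^ k / fact k) \<le> (\<Sum>k<m. exp (- l) * l ^ m)"
  proof (rule sum_mono)
    fix k assume "k \<in> {..<m}"
    then have "l ^ k \<le> l ^ m" using l1 by (intro power_increasing) auto
    moreover have "l ^ k / fact k \<le> l ^ k"
      using l1 by (simp add: divide_le_eq mult_le_cancel_left1 less_le_trans[OF zero_less_one])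
    ultimately have "l ^ k / fact k \<le> l ^ m" by linarith
    from mult_left_mono[OF this, of "exp (- l)"]
    show "exp (- l) * l ^ k / fact k \<le> exp (- l) * l ^ m" by simp
  qed
  also have "\<dots> = real m * l ^ (m + 1) * exp (- l) / l" using l1 by simp
  also have "\<dots> \<le> exp l * exp (- l) / l"
    using mult_power_Suc_le_exp[OF lq] l1 by (intro divide_right_mono mult_right_mono) auto
  also have "\<dots> = 1 / l" by (simp add: exp_minus_inverse)
  also have "\<dots> = exp (- u)" by (simp add: l_def exp_minus inverse_eq_divide)
  finally show ?thesis unfolding l_def .
qed

lemma summable_inverse_Suc_square: "summable (\<lambda>j::nat. 1 / (real j + 1) ^ 2)"
proof -
  have "summable (\<lambda>n::nat. inverse (real n ^ 2))" by (rule inverse_power_summable) auto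
  then have "summable (\<lambda>n::nat. inverse (real (Suc n) ^ 2))" by (subst summable_Suc_iff)
  then show ?thesis by (simp add: inverse_eq_divide add.commute)
qed

lemma exp_neg_powr_le:
  fixes \<eta> :: real and p K j :: nat
  assumes "\<eta> > 0" and "2 \<le> real p / \<eta>" and "K \<ge> 1"
  shows "exp (- (real (K + j) powr (1 / \<eta>)))
           \<le> fact p * real K powr (2 - real p / \<eta>) * (1 / (real j + 1) ^ 2)"
proof -
  define k where "k = real (K + j)"
  define r where "r = real p / \<eta>"
  define t where "t = k powr (1 / \<eta>)"
  have k1: "k \<ge> 1" using assms(3) unfolding k_def by simp
  have t0: "t > 0" using k1 unfolding t_def by simp
  have "t ^ p = k powr r"
    using t0 k1 by (simp add: t_def r_def powr_realpow[symmetric] powr_powr)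
  moreover have "t ^ p / fact p \<le> exp t" using t0 power_div_fact_le_exp by simp
  ultimately have "exp (- t) \<le> fact p * k powr (- r)"
    using t0 k1 by (simp add: exp_minus powr_minus field_simps)
  also have "k powr (- r) = k powr (2 - r) * k powr (-2)" using k1 by (simp add: powr_add[symmetric])
  also have "\<dots> \<le> real K powr (2 - r) * (1 / (real j + 1) ^ 2)"
  proof (rule mult_mono)
    show "k powr (2 - r) \<le> real K powr (2 - r)"
      using assms(2,3) unfolding k_def r_def by (intro powr_mono2') auto
    have "k powr (-2) = 1 / k ^ 2" using k1 by (simp add: powr_minus powr_realpow divide_inverse)
    also have "\<dots> \<le> 1 / (real j + 1) ^ 2"
      using assms(3) unfolding k_def by (intro divide_left_mono power_mono) auto
    finally show "k powr (-2) \<le> 1 / (real j + 1) ^ 2" .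
  qed auto
  finally show ?thesis unfolding t_def k_def r_def by (simp add: mult_left_mono mult.assoc)
qed

lemma ennreal_le_of_nat_plus_count:
  assumes "0 \<le> (X::real)"
  shows "ennreal X \<le> of_nat K + (\<Sum>j. if real (K + j) < X then 1 else 0)"
proof (cases "X \<le> real K")
  case True
  then have "ennreal X \<le> of_nat K" by (simp add: ennreal_of_nat_eq_real_of_nat ennreal_leI)
  then show ?thesis by (rule order_trans) (rule add_increasing2, auto)
next
  case False
  define n where "n = nat \<lceil>X\<rceil>"
  have Xn: "X \<le> real n" and Xn1: "real n < X + 1" and Kn: "K < n"
    using False unfolding n_def by linarith+
  have "ennreal X \<le> of_nat n" using Xn by (simp add: ennreal_of_nat_eq_real_of_nat ennreal_leI)
  also have "\<dots> = of_nat K + (\<Sum>j<n - K. 1)" using Kn by (simp flip: of_nat_add)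
  also have "(\<Sum>j<n - K. 1) \<le> (\<Sum>j<n - K. if real (K + j) < X then 1 else (0::ennreal))"
  proof (intro sum_mono)
    fix j assume "j \<in> {..<n - K}"
    then have "real (K + j + 1) \<le> real n" by (intro of_nat_mono) auto
    then show "1 \<le> (if real (K + j) < X then 1 else (0::ennreal))" using Xn1 by simp
  qed
  also have "\<dots> \<le> (\<Sum>j. if real (K + j) < X then 1 else 0)"
    by (rule sum_le_suminf[OF summableI]) auto
  finally show ?thesis by (simp add: add_left_mono)
qed

lemma abs_ln_gt_imp_exp_outside:
  fixes S :: real
  assumes "0 < lo" and "lo \<le> S" and "S \<le> hi" and "t < \<bar>ln S\<bar>"
  shows "exp t < hi \<or> lo < exp (- t)"
proof -
  have S: "0 < S" using assms by linarith
  show ?thesis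
  proof (cases "0 \<le> ln S")
    case True
    then have "exp t < exp (ln S)" using assms(4) by simp
    then show ?thesis using S assms(3) by simp
  next
    case False
    then have "exp (ln S) < exp (- t)" using assms(4) by simp
    then show ?thesis using S assms(2) by simp
  qed
qed

lemma abs_ln_sum_powr_le_count:
  fixes v :: "nat \<Rightarrow> real" and J :: "nat \<Rightarrow> nat" and \<eta> :: real
  assumes pos: "\<forall>i. 0 < v i" and dec: "decseq v" and J: "\<forall>k<N. J k < m"
    and N: "N \<ge> 1" and \<eta>: "\<eta> > 0"
  shows "ennreal (\<bar>ln (\<Sum>k<N. v (J k))\<bar> powr \<eta>) \<le> of_nat K +
     (\<Sum>j. (if exp (real (K + j) powr (1 / \<eta>)) / N < v 0 then 1 else 0)
          + (if v (m - 1) < exp (- (real (K + j) powr (1 / \<eta>))) then 1 else 0))"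
proof -
  define S where "S = (\<Sum>k<N. v (J k))"
  have "v (m - 1) \<le> v (J 0)" using J N by (intro decseqD[OF dec]) auto
  also have "v (J 0) \<le> S"
    unfolding S_def using N pos by (intro member_le_sum) (simp_all add: less_imp_le)
  finally have lo: "v (m - 1) \<le> S" .
  have "v (J k) \<le> v 0" for k using decseqD[OF dec, of 0 "J k"] by simp
  then have hi: "S \<le> N * v 0"
    unfolding S_def using sum_bounded_above[of "{..<N}" "\<lambda>k. v (J k)" "v 0"] by simp
  have "(if real (K + j) < \<bar>ln S\<bar> powr \<eta> then 1 else 0)
     \<le> (if exp (real (K + j) powr (1 / \<eta>)) / N < v 0 then 1 else 0)
          + (if v (m - 1) < exp (- (real (K + j) powr (1 / \<eta>))) then 1 else (0::ennreal))" for j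
  proof (cases "real (K + j) < \<bar>ln S\<bar> powr \<eta>")
    case True
    then have "real (K + j) powr (1 / \<eta>) < (\<bar>ln S\<bar> powr \<eta>) powr (1 / \<eta>)"
      using \<eta> by (intro powr_less_mono2) auto
    then have "real (K + j) powr (1 / \<eta>) < \<bar>ln S\<bar>" using \<eta> by (simp add: powr_powr)
    with abs_ln_gt_imp_exp_outside[OF _ lo hi] pos N show ?thesis
      by (auto simp: pos_divide_less_eq mult.commute)
  qed simp
  then have "(\<Sum>j. if real (K + j) < \<bar>ln S\<bar> powr \<eta> then 1 else 0 :: ennreal)
     \<le> (\<Sum>j. (if exp (real (K + j) powr (1 / \<eta>)) / N < v 0 then 1 else 0)
          + (if v (m - 1) < exp (- (real (K + j) powr (1 / \<eta>))) then 1 else 0))"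
    by (rule suminf_le) (rule summableI)+
  with ennreal_le_of_nat_plus_count[of "\<bar>ln S\<bar> powr \<eta>" K] show ?thesis
    unfolding S_def by (meson add_left_mono order_trans powr_ge_zero)
qed

lemma is_cond_swor_null_out_of_range:
  assumes "prob_space M" and "is_cond_swor M \<beta> m w I" and "k < N" and "m N \<le> j k"
  shows "{x \<in> space M. \<forall>k<N. I N x k = j k} \<in> null_sets M"
proof -
  interpret prob_space M by fact
  have [measurable]: "k < N \<Longrightarrow> (\<lambda>x. I N x k) \<in> measurable M (count_space UNIV)" for k
    using assms(2) unfolding is_cond_swor_def by blast
  have sets: "{x \<in> space M. \<forall>k<N. I N x k = j k} \<in> sets M" by measurable
  have "UNIV \<in> sets (PiM UNIV (\<lambda>_::nat. borel :: real measure))"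
    using sets.top[of "PiM UNIV (\<lambda>_::nat. borel :: real measure)"] by (simp add: space_PiM)
  then have "measure M {x \<in> space M. (\<forall>k<N. I N x k = j k) \<and> (\<lambda>i. w i x) \<in> UNIV}
      = (\<integral>x. indicator {x \<in> space M. (\<lambda>i. w i x) \<in> UNIV} x * swor_prob \<beta> (\<lambda>i. w i x) (m N) N j \<partial>M)"
    by (rule assms(2)[unfolded is_cond_swor_def, THEN conjunct2, rule_format, of UNIV N j])
  moreover have "swor_prob \<beta> ws (m N) N j = 0" for ws
    using assms(3,4) unfolding swor_prob_def by auto
  ultimately have "measure M {x \<in> space M. \<forall>k<N. I N x k = j k} = 0" by simp
  with sets show ?thesis by (simp add: emeasure_eq_measure null_setsI)
qed

lemma is_cond_swor_AE_less:
  assumes "prob_space M" and "is_cond_swor M \<beta> m w I"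
  shows "AE x in M. \<forall>k<N. I N x k < m N"
proof -
  let ?L = "{xs :: nat list. length xs = N \<and> (\<exists>k<N. m N \<le> xs ! k)}"
  have "AE x in M. \<forall>xs\<in>?L. \<not> (\<forall>k<N. I N x k = xs ! k)"
  proof (rule AE_ball_countable')
    fix xs assume "xs \<in> ?L"
    then obtain k where "k < N" and "m N \<le> xs ! k" by blast
    then have "{x \<in> space M. \<forall>k<N. I N x k = xs ! k} \<in> null_sets M"
      by (rule is_cond_swor_null_out_of_range[OF assms])
    from AE_not_in[OF this] show "AE x in M. \<not> (\<forall>k<N. I N x k = xs ! k)"
      by (rule AE_mp) (intro AE_I2, auto)
  qed (rule countable_subset[OF subset_UNIV countableI_type])
  then show ?thesis
  proof (rule eventually_mono)
    fix x assume h: "\<forall>xs\<in>?L. \<not> (\<forall>k<N. I N x k = xs ! k)"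
    show "\<forall>k<N. I N x k < m N"
    proof (rule ccontr)
      assume "\<not> (\<forall>k<N. I N x k < m N)"
      then have "map (I N x) [0..<N] \<in> ?L" by (auto simp: not_less)
      from h[rule_format, OF this] show False by simp
    qed
  qed
qed

lemma ppp_extreme_atoms_tail:
  assumes "prob_space M" and "is_ppp_inv_sq M w" and "m \<ge> 1" and "N \<ge> 1"
    and "3 * ln (2 * real m + 2) \<le> t"
  shows "measure M {x \<in> space M. exp t / N < w 0 x} + measure M {x \<in> space M. w (m - 1) x < exp (- t)}
           \<le> (real N + 1) * exp (- t)"
proof -
  have "measure M {x \<in> space M. exp t / N < w 0 x} \<le> 1 / (exp t / N)"
    using assms(4) by (intro ppp_first_atom_tail assms(1,2)) auto
  also have "\<dots> = N * exp (- t)" by (simp add: exp_minus field_simps)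
  finally have A: "measure M {x \<in> space M. exp t / N < w 0 x} \<le> N * exp (- t)" .
  have "measure M {x \<in> space M. w (m - 1) x < exp (- t)}
      \<le> (\<Sum>k<m. exp (- (1 / exp (- t))) * (1 / exp (- t)) ^ k / fact k)"
    by (intro ppp_atom_lower_tail assms(1-3)) auto
  also have "\<dots> = (\<Sum>k<m. exp (- exp t) * exp t ^ k / fact k)" by (simp add: exp_minus divide_inverse)
  also have "\<dots> \<le> exp (- t)" by (rule poisson_cdf_le_exp_neg) fact
  finally show ?thesis using A by (simp add: algebra_simps)
qed

lemma nn_integral_abs_ln_sum_powr_le:
  fixes J :: "'a \<Rightarrow> nat \<Rightarrow> nat" and \<eta> :: real
  assumes ppp: "is_ppp_inv_sq M w" and J: "AE x in M. \<forall>k<N. J x k < m"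
    and E: "E \<in> sets M" and N: "N \<ge> 1" and \<eta>: "\<eta> > 0"
  shows "(\<integral>\<^sup>+ x\<in>E. ennreal (\<bar>ln (\<Sum>k<N. w (J x k) x)\<bar> powr \<eta>) \<partial>M)
    \<le> of_nat K * emeasure M E
       + (\<Sum>j. emeasure M {x \<in> space M. exp (real (K + j) powr (1 / \<eta>)) / N < w 0 x}
             + emeasure M {x \<in> space M. w (m - 1) x < exp (- (real (K + j) powr (1 / \<eta>)))})"
proof -
  define A where "A j = {x \<in> space M. exp (real (K + j) powr (1 / \<eta>)) / N < w 0 x}" for j
  define B where "B j = {x \<in> space M. w (m - 1) x < exp (- (real (K + j) powr (1 / \<eta>)))}" for j
  have [measurable]: "w i \<in> borel_measurable M" for i
    using ppp unfolding is_ppp_inv_sq_def by blast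
  have [measurable]: "A j \<in> sets M" "B j \<in> sets M" "E \<in> sets M" for j
    unfolding A_def B_def using E by measurable
  have "(\<integral>\<^sup>+ x\<in>E. ennreal (\<bar>ln (\<Sum>k<N. w (J x k) x)\<bar> powr \<eta>) \<partial>M)
      \<le> (\<integral>\<^sup>+ x. of_nat K * indicator E x + (\<Sum>j. indicator (A j) x + indicator (B j) x) \<partial>M)"
  proof (rule nn_integral_mono_AE)
    show "AE x in M. ennreal (\<bar>ln (\<Sum>k<N. w (J x k) x)\<bar> powr \<eta>) * indicator E x
        \<le> of_nat K * indicator E x + (\<Sum>j. indicator (A j) x + indicator (B j) x)"
      using J is_ppp_inv_sq_AE_pos_decseq[OF ppp] AE_space
    proof eventually_elim
      case (elim x)
      then show ?case
        using abs_ln_sum_powr_le_count[where v = "\<lambda>i. w i x" and J = "J x" and K = K] N \<eta>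
        by (auto simp: A_def B_def indicator_def of_bool_def intro: add_increasing2)
    qed
  qed
  also have "\<dots> = of_nat K * emeasure M E + (\<Sum>j. emeasure M (A j) + emeasure M (B j))"
    by (simp add: nn_integral_add nn_integral_suminf nn_integral_cmult_indicator)
  finally show ?thesis unfolding A_def B_def .
qed

lemma nn_integral_abs_ln_sum_powr_bound:
  fixes J :: "'a \<Rightarrow> nat \<Rightarrow> nat" and \<eta> :: real
  assumes "prob_space M" and ppp: "is_ppp_inv_sq M w" and "AE x in M. \<forall>k<N. J x k < m"
    and E: "E \<in> sets M" and N: "N \<ge> 1" and m: "m \<ge> 1" and K: "K \<ge> 1" and \<eta>: "\<eta> > 0"
    and p: "2 \<le> real p / \<eta>" and cond: "3 * ln (2 * real m + 2) \<le> real K powr (1 / \<eta>)"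
  shows "(\<integral>\<^sup>+ x\<in>E. ennreal (\<bar>ln (\<Sum>k<N. w (J x k) x)\<bar> powr \<eta>) \<partial>M)
    \<le> ennreal (real K * measure M E
         + (real N + 1) * (fact p * (\<Sum>j. 1 / (real j + 1) ^ 2)) * real K powr (2 - real p / \<eta>))"
proof -
  interpret prob_space M by fact
  define C where "C = (real N + 1) * fact p * real K powr (2 - real p / \<eta>)"
  have C: "C \<ge> 0" unfolding C_def by simp
  have tail: "emeasure M {x \<in> space M. exp (real (K + j) powr (1 / \<eta>)) / N < w 0 x}
      + emeasure M {x \<in> space M. w (m - 1) x < exp (- (real (K + j) powr (1 / \<eta>)))}
      \<le> ennreal (C * (1 / (real j + 1) ^ 2))" for j
  proof -
    have "real K powr (1 / \<eta>) \<le> real (K + j) powr (1 / \<eta>)"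
      using \<eta> by (intro powr_mono2) auto
    with cond have "3 * ln (2 * real m + 2) \<le> real (K + j) powr (1 / \<eta>)" by linarith
    from ppp_extreme_atoms_tail[OF assms(1) ppp m N this]
    have "measure M {x \<in> space M. exp (real (K + j) powr (1 / \<eta>)) / N < w 0 x}
      + measure M {x \<in> space M. w (m - 1) x < exp (- (real (K + j) powr (1 / \<eta>)))}
      \<le> (real N + 1) * exp (- (real (K + j) powr (1 / \<eta>)))" .
    also have "\<dots> \<le> C * (1 / (real j + 1) ^ 2)"
      using mult_left_mono[OF exp_neg_powr_le[OF \<eta> p K, of j], of "real N + 1"]
      unfolding C_def by (simp add: mult.assoc)
    finally show ?thesis by (simp add: emeasure_eq_measure ennreal_leI flip: ennreal_plus)
  qed
  have "(\<integral>\<^sup>+ x\<in>E. ennreal (\<bar>ln (\<Sum>k<N. w (J x k) x)\<bar> powr \<eta>) \<partial>M)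
      \<le> of_nat K * emeasure M E + (\<Sum>j. ennreal (C * (1 / (real j + 1) ^ 2)))"
    by (rule order_trans[OF nn_integral_abs_ln_sum_powr_le[OF ppp assms(3) E N \<eta>, where K = K]])
      (intro add_left_mono suminf_le summableI tail)
  also have "(\<Sum>j. ennreal (C * (1 / (real j + 1) ^ 2))) = ennreal (\<Sum>j. C * (1 / (real j + 1) ^ 2))"
    using C summable_inverse_Suc_square by (intro suminf_ennreal2 summable_mult) auto
  also have "(\<Sum>j. C * (1 / (real j + 1) ^ 2)) = C * (\<Sum>j. 1 / (real j + 1) ^ 2)"
    by (rule suminf_mult[OF summable_inverse_Suc_square])
  also have "of_nat K * emeasure M E = ennreal (real K * measure M E)"
    by (simp add: emeasure_eq_measure ennreal_mult ennreal_of_nat_eq_real_of_nat)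
  finally show ?thesis
    using C summable_inverse_Suc_square
    by (simp add: C_def suminf_nonneg mult_ac flip: ennreal_plus)
qed

lemma eventually_ln_le_ceiling_powr:
  fixes \<gamma> \<eta> \<eta>' :: real
  assumes "\<gamma> > 0" and "\<eta> > 0" and "\<eta>' > 0"
  shows "eventually (\<lambda>N::nat. 3 * ln (2 * real (nat \<lceil>real N powr \<gamma>\<rceil>) + 2)
           \<le> real (nat \<lceil>real N powr \<eta>'\<rceil>) powr (1 / \<eta>)) sequentially"
proof -
  have "eventually (\<lambda>N::nat. 3 * ln (2 * (real N powr \<gamma> + 1) + 2) \<le> real N powr (\<eta>' / \<eta>))
      sequentially"
    using assms by real_asymp
  with eventually_ge_at_top[of 1] show ?thesis
  proof eventually_elim
    case (elim N)
    have "real (nat \<lceil>real N powr \<gamma>\<rceil>) \<le> real N powr \<gamma> + 1" by (simp add: of_nat_nat)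
    then have "3 * ln (2 * real (nat \<lceil>real N powr \<gamma>\<rceil>) + 2) \<le> 3 * ln (2 * (real N powr \<gamma> + 1) + 2)"
      by (smt (verit) ln_mono of_nat_0_le_iff)
    also have "\<dots> \<le> (real N powr \<eta>') powr (1 / \<eta>)" using elim by (simp add: powr_powr)
    also have "\<dots> \<le> real (nat \<lceil>real N powr \<eta>'\<rceil>) powr (1 / \<eta>)"
      using assms(2) by (intro powr_mono2) auto
    finally show ?case .
  qed
qed

lemma ceiling_powr_bound_tendsto_zero:
  fixes P :: "nat \<Rightarrow> real" and a c \<eta>' :: real
  assumes \<eta>': "\<eta>' > 0" and a: "a * \<eta>' \<le> -2" and P: "\<And>N. 0 \<le> P N"
    and lim: "(\<lambda>N. real N powr \<eta>' * P N) \<longlonglongrightarrow> 0"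
  shows "(\<lambda>N. real (nat \<lceil>real N powr \<eta>'\<rceil>) * P N
           + (real N + 1) * c * real (nat \<lceil>real N powr \<eta>'\<rceil>) powr a) \<longlonglongrightarrow> 0"
proof (rule tendsto_add_zero)
  define K where "K N = real (nat \<lceil>real N powr \<eta>'\<rceil>)" for N :: nat
  have K: "real N powr \<eta>' \<le> K N" "K N \<le> 2 * real N powr \<eta>'" if "N \<ge> 1" for N
    using ge_one_powr_ge_zero[of "real N" \<eta>'] that \<eta>' unfolding K_def by linarith+
  show "(\<lambda>N. K N * P N) \<longlonglongrightarrow> 0"
  proof (rule Lim_null_comparison)
    show "eventually (\<lambda>N. norm (K N * P N) \<le> 2 * (real N powr \<eta>' * P N)) sequentially"
      using eventually_ge_at_top[of 1]
    proof eventually_elim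
      case (elim N)
      have "K N * P N \<le> 2 * real N powr \<eta>' * P N" using K(2)[OF elim] P by (rule mult_right_mono)
      moreover have "0 \<le> K N * P N" unfolding K_def by (rule mult_nonneg_nonneg[OF of_nat_0_le_iff P])
      ultimately show ?case by simp
    qed
  qed (use tendsto_mult_right_zero[OF lim] in simp)
  show "(\<lambda>N. (real N + 1) * c * K N powr a) \<longlonglongrightarrow> 0"
  proof (rule Lim_null_comparison)
    show "eventually (\<lambda>N. norm ((real N + 1) * c * K N powr a)
        \<le> \<bar>c\<bar> * ((real N + 1) * real N powr (-2))) sequentially"
      using eventually_ge_at_top[of 1]
    proof eventually_elim
      case (elim N)
      have "a \<le> 0" using a \<eta>' by (smt (verit) mult_nonneg_nonneg)
      have "K N powr a \<le> (real N powr \<eta>') powr a"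
        using K(1)[OF elim] elim \<open>a \<le> 0\<close> by (intro powr_mono2') auto
      also have "\<dots> \<le> real N powr (-2)"
        using a elim by (auto simp: powr_powr mult.commute intro!: powr_mono)
      finally show ?case by (simp add: abs_mult mult_left_mono mult.commute mult.left_commute)
    qed
    have "(\<lambda>N::nat. (real N + 1) * real N powr (-2)) \<longlonglongrightarrow> 0" by real_asymp
    then show "(\<lambda>N. \<bar>c\<bar> * ((real N + 1) * real N powr (-2))) \<longlonglongrightarrow> 0"
      by (rule tendsto_mult_right_zero)
  qed
qed

theorem lemma4p7:
  fixes M :: "'a measure" and \<gamma> \<beta> \<eta>' :: real
    and w :: "nat \<Rightarrow> 'a \<Rightarrow> real" and I :: "nat \<Rightarrow> 'a \<Rightarrow> nat \<Rightarrow> nat"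
    and E :: "nat \<Rightarrow> 'a set"
  assumes "prob_space M"
    and "\<gamma> > 1" and "0 < \<beta>" and "\<beta> < 1"
    and "is_ppp_inv_sq M w"
    and "is_cond_swor M \<beta> (\<lambda>N. nat \<lceil>real N powr \<gamma>\<rceil>) w I"
    and "\<And>N. E N \<in> sets M"
    and "\<eta>' > 0"
    and "(\<lambda>N. real N powr \<eta>' * measure M (E N)) \<longlonglongrightarrow> 0"
  shows "\<forall>\<eta>>0. (\<lambda>N. \<integral>\<^sup>+ x\<in>E N. ennreal (\<bar>ln (\<Sum>k<N. w (I N x k) x)\<bar> powr \<eta>) \<partial>M)
                 \<longlonglongrightarrow> 0"
proof (intro allI impI)
  fix \<eta> :: real assume \<eta>: "\<eta> > 0"
  define p where "p = nat \<lceil>\<eta> * (2 + 2 / \<eta>')\<rceil>"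
  have "\<eta> * (2 + 2 / \<eta>') \<le> real p" unfolding p_def by linarith
  then have r: "2 + 2 / \<eta>' \<le> real p / \<eta>" using \<eta> by (simp add: pos_le_divide_eq mult.commute)
  then have p: "2 \<le> real p / \<eta>" using assms(8) by (smt (verit) divide_pos_pos)
  have "2 * \<eta>' + 2 \<le> real p / \<eta> * \<eta>'"
    using mult_right_mono[OF r, of \<eta>'] assms(8) by (simp add: distrib_right)
  then have a: "(2 - real p / \<eta>) * \<eta>' \<le> -2" by (simp add: left_diff_distrib)
  let ?K = "\<lambda>N::nat. nat \<lceil>real N powr \<eta>'\<rceil>"
  let ?b = "\<lambda>N. real (?K N) * measure M (E N)
    + (real N + 1) * (fact p * (\<Sum>j. 1 / (real j + 1) ^ 2)) * real (?K N) powr (2 - real p / \<eta>)"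
  have bound: "eventually (\<lambda>N. (\<integral>\<^sup>+ x\<in>E N. ennreal (\<bar>ln (\<Sum>k<N. w (I N x k) x)\<bar> powr \<eta>) \<partial>M)
      \<le> ennreal (?b N)) sequentially"
    using eventually_ge_at_top[of 1]
      eventually_ln_le_ceiling_powr[OF less_trans[OF zero_less_one assms(2)] \<eta> assms(8)]
  proof eventually_elim
    case (elim N)
    have "1 \<le> real N powr \<gamma>" "1 \<le> real N powr \<eta>'"
      using elim assms(2,8) by (auto intro: ge_one_powr_ge_zero)
    then show ?case
      by (intro nn_integral_abs_ln_sum_powr_bound[OF assms(1,5) is_cond_swor_AE_less[OF assms(1,6)]
            assms(7) elim(1) _ _ \<eta> p elim(2)]) linarith+
  qed
  have lim: "(\<lambda>N. ennreal (?b N)) \<longlonglongrightarrow> 0"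
    using ceiling_powr_bound_tendsto_zero[OF assms(8) a measure_nonneg assms(9)]
    by (simp add: tendsto_ennrealI[where x = 0, simplified])
  show "(\<lambda>N. \<integral>\<^sup>+ x\<in>E N. ennreal (\<bar>ln (\<Sum>k<N. w (I N x k) x)\<bar> powr \<eta>) \<partial>M) \<longlonglongrightarrow> 0"
    by (rule tendsto_sandwich[OF _ bound tendsto_const lim]) simp
qed

end
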